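(* Let $P\in\mathbb{R}^N$ and $\delta\in(0,1)$. For every $x\in\mathbb{R}^N$ there are open sets $U_x$, $W_x$ with $x\in\overline{U_x}\cap\overline{W_x}$ such that $S_1(x,y)+P\cdot(x-y)<1+|P|\,r_V(\delta,1)$ for all $y\in U_x$, and $S_1(y,x)+P\cdot(y-x)<1+|P|\,r_V(\delta,1)$ for all $y\in W_x$. Moreover each of the families $\{U_x\}_{x\in\mathbb{R}^N}$ and $\{W_x\}_{x\in\mathbb{R}^N}$ is an open covering of $\mathbb{R}^N$.
   Context: $V:\mathbb{R}^N\to\mathbb{R}^N$ is $\mathbb{Z}^N$-periodic and Lipschitz continuous with Lipschitz constant $L_V$; $r_V(\delta,1)=(1-\delta)/L_V$ (with $r_V=+\infty$ if $L_V=0$). $H(x,p)=|p|+p\cdot V(x)$, $Z(x)=\{p\mid H(x,p)\le1\}$, $\sigma(x,q)=\sup\{p\cdot q\mid p\in Z(x)\}\in[0,+\infty]$. For a Lipschitz curve $\xi:[0,T]\to\mathbb{R}^N$, $\ell_V(\xi)=\int_0^T\sigma(\xi(t),\dot\xi(t))\,dt$, and $S_1(x,y)=\inf\{\ell_V(\xi)\mid \xi$ Lipschitz curve joining $x$ to $y\}$. *)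

theory Defs
  imports "HOL-Analysis.Analysis"
begin

definition Ham :: "(real^'n \<Rightarrow> real^'n) \<Rightarrow> real^'n \<Rightarrow> real^'n \<Rightarrow> real" where
  "Ham V x p = norm p + p \<bullet> V x"

definition Zset :: "(real^'n \<Rightarrow> real^'n) \<Rightarrow> real^'n \<Rightarrow> (real^'n) set" where
  "Zset V x = {p. Ham V x p \<le> 1}"

text \<open>Support function sigma(x,q) = sup {p . q | p in Z(x)}, valued in [0,+infinity]
  (it is nonnegative since 0 belongs to Z(x)).\<close>
definition sigma_V :: "(real^'n \<Rightarrow> real^'n) \<Rightarrow> real^'n \<Rightarrow> real^'n \<Rightarrow> ennreal" where
  "sigma_V V x q = (SUP p \<in> Zset V x. ennreal (p \<bullet> q))"

definition ell_V :: "(real^'n \<Rightarrow> real^'n) \<Rightarrow> (real \<Rightarrow> real^'n) \<Rightarrow> real \<Rightarrow> ennreal" where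
  "ell_V V \<xi> T = (\<integral>\<^sup>+ t \<in> {0..T}. sigma_V V (\<xi> t) (vector_derivative \<xi> (at t)) \<partial>lborel)"

definition lip_curve :: "(real \<Rightarrow> real^'n) \<Rightarrow> real \<Rightarrow> real^'n \<Rightarrow> real^'n \<Rightarrow> bool" where
  "lip_curve \<xi> T x y \<longleftrightarrow> 0 \<le> T \<and> (\<exists>L. L-lipschitz_on {0..T} \<xi>) \<and> \<xi> 0 = x \<and> \<xi> T = y"

definition S1 :: "(real^'n \<Rightarrow> real^'n) \<Rightarrow> real^'n \<Rightarrow> real^'n \<Rightarrow> ennreal" where
  "S1 V x y = (INF (\<xi>, T) \<in> {(\<xi>, T). lip_curve \<xi> T x y}. ell_V V \<xi> T)"

text \<open>r_V(delta,1) = (1 - delta)/L_V, and +infinity if L_V = 0.\<close>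
definition rV :: "real \<Rightarrow> real \<Rightarrow> ereal" where
  "rV LV \<delta> = (if LV = 0 then \<infinity> else ereal ((1 - \<delta>) / LV))"

definition Zn_periodic :: "(real^'n \<Rightarrow> 'b) \<Rightarrow> bool" where
  "Zn_periodic f \<longleftrightarrow> (\<forall>x z. (\<forall>i. z $ i \<in> \<int>) \<longrightarrow> f (x + z) = f x)"

end

theory Submission
  imports Defs
begin

text \<open>If \<open>|q - l V(z)| \<le> l\<close> then every \<open>p\<close> with \<open>|p| + p\<cdot>V(z) \<le> 1\<close> satisfies
  \<open>p\<cdot>q \<le> l (|p| + p\<cdot>V(z)) \<le> l\<close>, so \<open>\<sigma>(z,q) \<le> l\<close>. Hence if \<open>y\<close> lies within \<open>l/2\<close> of
  \<open>x + l V(x)\<close> and \<open>l\<close> is small, the straight segment from \<open>x\<close> to \<open>y\<close>, run in unit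
  time, has length at most \<open>l\<close> (the Lipschitz bound keeps \<open>V\<close> close to \<open>V(x)\<close> along it),
  while \<open>P\<cdot>(x - y) = O(l)\<close>; so the left-hand side is in fact below 1.
  \<open>U\<^sub>x\<close> is the union of the balls \<open>B(x + l V(x), l/2)\<close> over small \<open>l > 0\<close>, which accumulate
  at \<open>x\<close>, and \<open>W\<^sub>x\<close> is the same with \<open>-V(x)\<close> and reversed segments. Every \<open>y\<close> lies in
  \<open>U\<^sub>x\<close> for \<open>x = y - l V(y)\<close> with \<open>l\<close> small enough.\<close>

lemma sigma_V_le:
  assumes "0 \<le> l" "norm (q - l *\<^sub>R V z) \<le> l"
  shows "sigma_V V z q \<le> ennreal l"
  unfolding sigma_V_def
proof (rule SUP_least)
  fix p assume "p \<in> Zset V z"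
  hence H: "norm p + p \<bullet> V z \<le> 1" by (simp add: Zset_def Ham_def)
  have "p \<bullet> q = l * (p \<bullet> V z) + p \<bullet> (q - l *\<^sub>R V z)"
    by (simp add: inner_diff_right)
  also have "\<dots> \<le> l * (p \<bullet> V z) + norm p * l"
    using norm_cauchy_schwarz[of p "q - l *\<^sub>R V z"] assms(2)
    by (meson add_left_mono mult_left_mono norm_ge_zero order_trans)
  also have "\<dots> = l * (norm p + p \<bullet> V z)" by (simp add: algebra_simps)
  also have "\<dots> \<le> l" using H assms(1) by (simp add: mult_left_le)
  finally show "ennreal (p \<bullet> q) \<le> ennreal l" by (rule ennreal_leI)
qed

lemma S1_le_segment:
  assumes "0 \<le> l" "\<And>w. w \<in> closed_segment a b \<Longrightarrow> norm (b - a - l *\<^sub>R V w) \<le> l"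
  shows "S1 V a b \<le> ennreal l"
proof -
  define \<xi> where "\<xi> t = a + t *\<^sub>R (b - a)" for t :: real
  have der: "vector_derivative \<xi> (at t) = b - a" for t
    unfolding \<xi>_def by (rule vector_derivative_at) (auto intro!: derivative_eq_intros)
  have "(norm (b - a))-lipschitz_on {0..1} \<xi>"
    unfolding lipschitz_on_def \<xi>_def
    by (auto simp: dist_norm scaleR_diff_left[symmetric] mult.commute)
  hence "lip_curve \<xi> 1 a b" unfolding lip_curve_def by (auto simp: \<xi>_def)
  hence "S1 V a b \<le> ell_V V \<xi> 1"
    unfolding S1_def by (intro INF_lower2[of "(\<xi>, 1)"]) auto
  also have "\<dots> \<le> (\<integral>\<^sup>+ t. ennreal l * indicator {0..1::real} t \<partial>lborel)"
    unfolding ell_V_def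
  proof (intro nn_integral_mono)
    fix t :: real
    show "sigma_V V (\<xi> t) (vector_derivative \<xi> (at t)) * indicator {0..1} t
        \<le> ennreal l * indicator {0..1} t"
    proof (cases "t \<in> {0..1}")
      case True
      hence "\<xi> t \<in> closed_segment a b"
        by (auto simp: \<xi>_def closed_segment_def algebra_simps intro!: exI[of _ t])
      hence "sigma_V V (\<xi> t) (b - a) \<le> ennreal l"
        using assms by (intro sigma_V_le) auto
      thus ?thesis using True der by simp
    qed simp
  qed
  also have "\<dots> = ennreal l" by (simp add: nn_integral_cmult_indicator)
  finally show ?thesis .
qed

lemma norm_diff_le_of_near_drift:
  fixes a b v :: "'a::real_normed_vector"
  assumes "norm (b - a - l *\<^sub>R v) \<le> l / 2"
  shows "norm (b - a) \<le> l * (norm v + 1)"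
proof -
  have "norm (b - a) \<le> norm (b - a - l *\<^sub>R v) + norm (l *\<^sub>R v)"
    using norm_triangle_ineq[of "b - a - l *\<^sub>R v" "l *\<^sub>R v"] by simp
  moreover have "0 \<le> l" using assms norm_ge_zero[of "b - a - l *\<^sub>R v"] by linarith
  ultimately show ?thesis using assms by (simp add: algebra_simps)
qed

lemma dist_le_of_mem_closed_segment:
  fixes a b :: "'a::euclidean_space"
  assumes "w \<in> closed_segment a b" "z \<in> closed_segment a b"
  shows "dist w z \<le> dist a b"
proof -
  have "closed_segment a b \<subseteq> cball w (dist a b)"
    using dist_in_closed_segment[OF assms(1)] by (intro closed_segment_subset) (auto simp: dist_commute)
  thus ?thesis using assms(2) by auto
qed

lemma S1_le_drift_step:
  assumes lip: "LV-lipschitz_on UNIV V" and z: "z \<in> closed_segment a b"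
    and near: "norm (b - a - l *\<^sub>R V z) \<le> l / 2"
    and small: "l * LV * (norm (V z) + 1) \<le> 1 / 2"
  shows "S1 V a b \<le> ennreal l"
proof (rule S1_le_segment)
  have LV: "0 \<le> LV" using lip by (rule lipschitz_on_nonneg)
  have step: "norm (b - a) \<le> l * (norm (V z) + 1)"
    using near by (rule norm_diff_le_of_near_drift)
  show l: "0 \<le> l" using near norm_ge_zero[of "b - a - l *\<^sub>R V z"] by linarith
  fix w assume w: "w \<in> closed_segment a b"
  have "dist w z \<le> norm (b - a)"
    using dist_le_of_mem_closed_segment[OF w z] by (simp add: dist_norm norm_minus_commute)
  hence "norm (V w - V z) \<le> LV * (l * (norm (V z) + 1))"
    using lipschitz_onD[OF lip, of w z] step LV
    by (simp add: dist_norm) (meson mult_left_mono order_trans)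
  hence "l * norm (V w - V z) \<le> l * (LV * (l * (norm (V z) + 1)))"
    using l by (rule mult_left_mono)
  also have "\<dots> \<le> l * (1 / 2)"
    using small l by (intro mult_left_mono) (simp_all add: algebra_simps)
  finally have drift: "norm (l *\<^sub>R (V w - V z)) \<le> l / 2" using l by simp
  have "norm (b - a - l *\<^sub>R V w) = norm ((b - a - l *\<^sub>R V z) - l *\<^sub>R (V w - V z))"
    by (rule arg_cong[of _ _ norm]) (simp add: algebra_simps)
  also have "\<dots> \<le> norm (b - a - l *\<^sub>R V z) + norm (l *\<^sub>R (V w - V z))"
    by (rule norm_triangle_ineq4)
  finally show "norm (b - a - l *\<^sub>R V w) \<le> l" using near drift by linarith
qed

definition step_bound :: "real \<Rightarrow> 'a::real_normed_vector \<Rightarrow> real" where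
  "step_bound c v = 1 / (2 * (1 + c * (norm v + 1)))"

lemma step_bound_pos: "0 \<le> c \<Longrightarrow> 0 < step_bound c v"
  by (simp add: step_bound_def add_pos_nonneg)

lemma mult_lt_step_bound:
  assumes "0 \<le> c" "l < step_bound c v"
  shows "l * (1 + c * (norm v + 1)) < 1 / 2"
  using assms by (simp add: step_bound_def field_simps add_pos_nonneg)

lemma S1_plus_inner_lt_one:
  assumes lip: "LV-lipschitz_on UNIV V" and z: "z \<in> closed_segment a b"
    and near: "norm (b - a - l *\<^sub>R V z) \<le> l / 2"
    and l: "l < step_bound (norm P + LV) (V z)"
  shows "enn2ereal (S1 V a b) + ereal (P \<bullet> (a - b)) < 1"
proof -
  have LV: "0 \<le> LV" using lip by (rule lipschitz_on_nonneg)
  have "0 \<le> l" using near norm_ge_zero[of "b - a - l *\<^sub>R V z"] by linarith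
  have step: "norm (a - b) \<le> l * (norm (V z) + 1)"
    using norm_diff_le_of_near_drift[OF near] by (simp add: norm_minus_commute)
  have total: "l + l * norm P * (norm (V z) + 1) + l * LV * (norm (V z) + 1) < 1 / 2"
    using mult_lt_step_bound[OF _ l] LV by (simp add: algebra_simps)
  have "0 \<le> l * norm P * (norm (V z) + 1)" using \<open>0 \<le> l\<close> by simp
  hence "l * LV * (norm (V z) + 1) \<le> 1 / 2" using total \<open>0 \<le> l\<close> by linarith
  hence "S1 V a b \<le> ennreal l" by (rule S1_le_drift_step[OF lip z near])
  hence "enn2ereal (S1 V a b) \<le> ereal l"
    using \<open>0 \<le> l\<close> by (metis enn2ereal_ennreal less_eq_ennreal.rep_eq)
  hence S1_le: "enn2ereal (S1 V a b) + ereal (P \<bullet> (a - b)) \<le> ereal (l + P \<bullet> (a - b))"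
    by (metis add_right_mono plus_ereal.simps(1))
  have "P \<bullet> (a - b) \<le> norm P * norm (a - b)" by (rule norm_cauchy_schwarz)
  also have "\<dots> \<le> norm P * (l * (norm (V z) + 1))" using step by (rule mult_left_mono) simp
  also have "\<dots> = l * norm P * (norm (V z) + 1)" by simp
  finally have "P \<bullet> (a - b) \<le> l * norm P * (norm (V z) + 1)" .
  moreover have "0 \<le> l * LV * (norm (V z) + 1)" using \<open>0 \<le> l\<close> LV by simp
  ultimately have "ereal (l + P \<bullet> (a - b)) < 1" using total by simp
  with S1_le show ?thesis by (rule order_le_less_trans)
qed

definition drift_cone :: "'a::real_normed_vector \<Rightarrow> real \<Rightarrow> 'a \<Rightarrow> 'a set" where
  "drift_cone v m x = (\<Union>l\<in>{0<..<m}. ball (x + l *\<^sub>R v) (l / 2))"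

lemma open_drift_cone: "open (drift_cone v m x)"
  by (auto simp: drift_cone_def)

lemma mem_drift_cone_iff:
  "y \<in> drift_cone v m x \<longleftrightarrow> (\<exists>l. 0 < l \<and> l < m \<and> norm (y - x - l *\<^sub>R v) < l / 2)"
  by (auto simp: drift_cone_def dist_norm norm_minus_commute algebra_simps)

lemma in_closure_drift_cone:
  assumes "0 < m"
  shows "x \<in> closure (drift_cone v m x)"
proof (rule Lim_in_closed_set)
  show "((\<lambda>l. x + l *\<^sub>R v) \<longlongrightarrow> x) (at_right 0)"
    by (auto intro!: tendsto_eq_intros)
  show "\<forall>\<^sub>F l in at_right 0. x + l *\<^sub>R v \<in> closure (drift_cone v m x)"
    using eventually_at_right_real[OF assms]
    by eventually_elim (auto simp: drift_cone_def intro!: closure_subset[THEN subsetD])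
qed auto

lemma drift_cones_cover:
  fixes V :: "'a::real_normed_vector \<Rightarrow> 'a"
  assumes lip: "LV-lipschitz_on UNIV V" and c: "0 \<le> c" and s: "\<bar>s\<bar> = 1"
  shows "\<exists>x. y \<in> drift_cone (s *\<^sub>R V x) (step_bound c (V x)) x"
proof -
  have LV: "0 \<le> LV" using lip by (rule lipschitz_on_nonneg)
  define C where "C = 1 + (c + LV) * (norm (V y) + 2)"
  have C: "1 \<le> C" using LV c by (simp add: C_def)
  define l where "l = 1 / (4 * C)"
  have l: "0 < l" "l * C = 1 / 4" using C by (simp_all add: l_def)
  define x where "x = y - (l * s) *\<^sub>R V y"
  have "LV * norm (V y) \<le> C"
    unfolding C_def using LV c by (simp add: algebra_simps add_increasing)
  hence "l * (LV * norm (V y)) \<le> l * C" using l by (intro mult_left_mono) auto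
  moreover have "LV * (l * norm (V y)) = l * (LV * norm (V y))" by simp
  ultimately have "LV * (l * norm (V y)) \<le> 1 / 4" using l(2) by linarith
  moreover have "norm (V x - V y) \<le> LV * (l * norm (V y))"
    using lipschitz_onD[OF lip, of x y] s l by (simp add: x_def dist_norm abs_mult)
  ultimately have dV: "norm (V x - V y) \<le> 1 / 4" by linarith
  hence "norm (V x) \<le> norm (V y) + 1"
    using norm_triangle_ineq2[of "V x" "V y"] by linarith
  hence "c * (norm (V x) + 1) \<le> c * (norm (V y) + 2)" using c by (intro mult_left_mono) auto
  also have "\<dots> \<le> (c + LV) * (norm (V y) + 2)" using LV by (intro mult_right_mono) auto
  finally have "1 + c * (norm (V x) + 1) \<le> C" by (simp add: C_def)
  moreover have "0 < 1 + c * (norm (V x) + 1)" using c by (simp add: add_pos_nonneg)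
  ultimately have "1 / (2 * C) \<le> step_bound c (V x)"
    unfolding step_bound_def using C by (intro divide_left_mono) auto
  moreover have "l < 1 / (2 * C)" using C by (simp add: l_def field_simps)
  ultimately have "l < step_bound c (V x)" by linarith
  moreover have "y - x - l *\<^sub>R (s *\<^sub>R V x) = (l * s) *\<^sub>R (V y - V x)"
    by (simp add: x_def algebra_simps)
  with dV l s have "norm (y - x - l *\<^sub>R (s *\<^sub>R V x)) < l / 2"
    by (simp add: abs_mult norm_minus_commute)
  ultimately show ?thesis using l(1) unfolding mem_drift_cone_iff by blast
qed

lemma S1_plus_inner_lt_one_forward:
  assumes lip: "LV-lipschitz_on UNIV V"
    and y: "y \<in> drift_cone (V x) (step_bound (norm P + LV) (V x)) x"
  shows "enn2ereal (S1 V x y) + ereal (P \<bullet> (x - y)) < 1"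
proof -
  obtain l where "l < step_bound (norm P + LV) (V x)" "norm (y - x - l *\<^sub>R V x) < l / 2"
    using y unfolding mem_drift_cone_iff by blast
  thus ?thesis by (intro S1_plus_inner_lt_one[OF lip, of x]) auto
qed

lemma S1_plus_inner_lt_one_backward:
  assumes lip: "LV-lipschitz_on UNIV V"
    and y: "y \<in> drift_cone (- V x) (step_bound (norm P + LV) (V x)) x"
  shows "enn2ereal (S1 V y x) + ereal (P \<bullet> (y - x)) < 1"
proof -
  obtain l where "l < step_bound (norm P + LV) (V x)" "norm (y - x - l *\<^sub>R (- V x)) < l / 2"
    using y unfolding mem_drift_cone_iff by blast
  moreover have "x - y - l *\<^sub>R V x = - (y - x - l *\<^sub>R (- V x))"
    by (simp add: algebra_simps)
  hence "norm (x - y - l *\<^sub>R V x) = norm (y - x - l *\<^sub>R (- V x))"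
    by (metis norm_minus_cancel)
  ultimately show ?thesis by (intro S1_plus_inner_lt_one[OF lip, of x]) auto
qed

theorem lemma5p3:
  fixes V :: "real^'n \<Rightarrow> real^'n" and LV :: real and P :: "real^'n" and \<delta> :: real
  assumes "Zn_periodic V"
    and "LV-lipschitz_on UNIV V"
    and "0 < \<delta>" and "\<delta> < 1"
  shows "\<exists>U W :: real^'n \<Rightarrow> (real^'n) set.
    (\<forall>x. open (U x) \<and> open (W x) \<and> x \<in> closure (U x) \<inter> closure (W x)
       \<and> (\<forall>y \<in> U x. enn2ereal (S1 V x y) + ereal (P \<bullet> (x - y)) < 1 + ereal (norm P) * rV LV \<delta>)
       \<and> (\<forall>y \<in> W x. enn2ereal (S1 V y x) + ereal (P \<bullet> (y - x)) < 1 + ereal (norm P) * rV LV \<delta>))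
    \<and> (\<Union>x. U x) = UNIV \<and> (\<Union>x. W x) = UNIV"
proof -
  note lip = assms(2)
  have LV: "0 \<le> LV" using lip by (rule lipschitz_on_nonneg)
  define m where "m x = step_bound (norm P + LV) (V x)" for x
  define U where "U x = drift_cone (V x) (m x) x" for x
  define W where "W x = drift_cone (- V x) (m x) x" for x
  have one_le: "1 \<le> 1 + ereal (norm P) * rV LV \<delta>"
    using LV assms(4) by (auto simp: rV_def intro!: ereal_0_le_mult)
  have "enn2ereal (S1 V x y) + ereal (P \<bullet> (x - y)) < 1 + ereal (norm P) * rV LV \<delta>"
    if "y \<in> U x" for x y
    using S1_plus_inner_lt_one_forward[OF lip] that one_le
    unfolding U_def m_def by (blast intro: order_less_le_trans)
  moreover have "enn2ereal (S1 V y x) + ereal (P \<bullet> (y - x)) < 1 + ereal (norm P) * rV LV \<delta>"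
    if "y \<in> W x" for x y
    using S1_plus_inner_lt_one_backward[OF lip] that one_le
    unfolding W_def m_def by (blast intro: order_less_le_trans)
  moreover have "open (U x)" "open (W x)" for x
    by (simp_all add: U_def W_def open_drift_cone)
  moreover have "x \<in> closure (U x) \<inter> closure (W x)" for x
    unfolding U_def W_def m_def using LV by (intro IntI in_closure_drift_cone step_bound_pos) simp_all
  moreover have "(\<Union>x. U x) = UNIV"
    using drift_cones_cover[OF lip, of "norm P + LV" 1] LV by (auto simp: U_def m_def)
  moreover have "(\<Union>x. W x) = UNIV"
    using drift_cones_cover[OF lip, of "norm P + LV" "-1"] LV by (auto simp: W_def m_def)
  ultimately show ?thesis by blast
qed

end
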